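(* Let $B$ be a complete filtered BV algebra and $r\in F^1B$ odd. Define the operator $T(\exp(r)):B\to B$ by $$T(\exp(r))a=\exp\!\big(c(\exp(r))\big)\cdot\exp(r)a,$$ where $\exp(r)a=\sum_{k\ge0}\frac{\mathrm{ad}(r)^k a}{k!}$, $\mathrm{ad}(r)=\{r,\cdot\}$, $c(\exp(r))=\sum_{n\ge0}\frac{\mathrm{ad}(r)^n(\partial r)}{(n+1)!}$, and $\exp(c)=\sum_{m\ge0}c^m/m!$ is the exponential in the algebra $B$. Then $\partial\circ T(\exp(r))=T(\exp(r))\circ\partial$.
   Context: A BV algebra is a $\mathbb Z_2$-graded unital graded-commutative algebra $B$ (parity $\tilde a$) with an odd bracket $\{\cdot,\cdot\}$ making it an odd Poisson algebra ($\{a,b\}=-(-1)^{(\tilde a+1)(\tilde b+1)}\{b,a\}$, graded Jacobi for shifted parity, $\{a,bc\}=\{a,b\}c+(-1)^{(\tilde a+1)\tilde b}b\{a,c\}$), and an odd operator $\partial$ with $\partial^2=0$ and $(-1)^{\tilde a}\{a,b\}=-\partial(ab)+(\partial a)b+(-1)^{\tilde a}a(\partial b)$. "Complete filtered" means $B$ carries a descending filtration $B=F^0B\supseteq F^1B\supseteq\cdots$ by graded subspaces with $F^iF^j\subseteq F^{i+j}$, $\{F^i,F^j\}\subseteq F^{i+j}$, $\partial F^i\subseteq F^i$, and $B$ is complete with respect to it, so that all series converge. *)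

theory Defs
  imports Main
begin

text \<open>A Z2-graded unital algebra is modelled as a (not necessarily commutative)
ring B of type 'a with two homogeneous components G 0 (even) and G 1 (odd).
The ground field is of characteristic 0; we only use that B is an algebra over
the rationals, i.e. positive integers are invertible in B.  The bracket and the
BV operator are additive (hence Q-linear).\<close>

definition invn :: "nat \<Rightarrow> 'a::ring_1" where
  "invn n = (SOME u. of_nat n * u = 1 \<and> u * of_nat n = 1)"

definition fconv :: "(nat \<Rightarrow> 'a::ring_1 set) \<Rightarrow> (nat \<Rightarrow> 'a) \<Rightarrow> 'a \<Rightarrow> bool" where
  "fconv F x s \<longleftrightarrow> (\<forall>i. \<exists>N. \<forall>n\<ge>N. x n - s \<in> F i)"

definition fcauchy :: "(nat \<Rightarrow> 'a::ring_1 set) \<Rightarrow> (nat \<Rightarrow> 'a) \<Rightarrow> bool" where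
  "fcauchy F x \<longleftrightarrow> (\<forall>i. \<exists>N. \<forall>m\<ge>N. \<forall>n\<ge>N. x m - x n \<in> F i)"

definition fsuminf :: "(nat \<Rightarrow> 'a::ring_1 set) \<Rightarrow> (nat \<Rightarrow> 'a) \<Rightarrow> 'a" where
  "fsuminf F f = (THE s. fconv F (\<lambda>n. \<Sum>k<n. f k) s)"

definition add_subgroup :: "'a::ring_1 set \<Rightarrow> bool" where
  "add_subgroup S \<longleftrightarrow> 0 \<in> S \<and> (\<forall>x\<in>S. \<forall>y\<in>S. x + y \<in> S) \<and> (\<forall>x\<in>S. - x \<in> S)"

definition complete_filtered_BV ::
  "(nat \<Rightarrow> 'a::ring_1 set) \<Rightarrow> (nat \<Rightarrow> 'a set) \<Rightarrow> ('a \<Rightarrow> 'a \<Rightarrow> 'a) \<Rightarrow> ('a \<Rightarrow> 'a) \<Rightarrow> bool"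
where
  "complete_filtered_BV G F br d \<longleftrightarrow>
     \<comment> \<open>rational algebra\<close>
     (\<forall>n::nat. n > 0 \<longrightarrow> (\<exists>u::'a. of_nat n * u = 1 \<and> u * of_nat n = 1)) \<and>
     \<comment> \<open>Z2-grading\<close>
     add_subgroup (G 0) \<and> add_subgroup (G 1) \<and> G 0 \<inter> G 1 = {0} \<and>
     (\<forall>a. \<exists>e\<in>G 0. \<exists>y\<in>G 1. a = e + y) \<and>
     1 \<in> G 0 \<and>
     (\<forall>p<2. \<forall>q<2. \<forall>a\<in>G p. \<forall>b\<in>G q. a * b \<in> G ((p + q) mod 2)) \<and>
     \<comment> \<open>graded commutativity\<close>
     (\<forall>p<2. \<forall>q<2. \<forall>a\<in>G p. \<forall>b\<in>G q. a * b = (-1) ^ (p * q) * (b * a)) \<and>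
     \<comment> \<open>odd bracket: biadditive, odd, odd Poisson\<close>
     (\<forall>a b c. br (a + b) c = br a c + br b c) \<and>
     (\<forall>a b c. br a (b + c) = br a b + br a c) \<and>
     (\<forall>p<2. \<forall>q<2. \<forall>a\<in>G p. \<forall>b\<in>G q. br a b \<in> G ((p + q + 1) mod 2)) \<and>
     (\<forall>p<2. \<forall>q<2. \<forall>a\<in>G p. \<forall>b\<in>G q.
        br a b = - ((-1) ^ ((p + 1) * (q + 1)) * br b a)) \<and>
     (\<forall>p<2. \<forall>q<2. \<forall>a\<in>G p. \<forall>b\<in>G q. \<forall>c.
        br a (br b c) = br (br a b) c + (-1) ^ ((p + 1) * (q + 1)) * br b (br a c)) \<and>
     (\<forall>p<2. \<forall>q<2. \<forall>a\<in>G p. \<forall>b\<in>G q. \<forall>c.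
        br a (b * c) = br a b * c + (-1) ^ ((p + 1) * q) * (b * br a c)) \<and>
     \<comment> \<open>BV operator\<close>
     (\<forall>a b. d (a + b) = d a + d b) \<and>
     (\<forall>p<2. \<forall>a\<in>G p. d a \<in> G ((p + 1) mod 2)) \<and>
     (\<forall>a. d (d a) = 0) \<and>
     (\<forall>p<2. \<forall>a\<in>G p. \<forall>b.
        (-1) ^ p * br a b = - d (a * b) + d a * b + (-1) ^ p * (a * d b)) \<and>
     \<comment> \<open>filtration\<close>
     F 0 = UNIV \<and> (\<forall>i. F (Suc i) \<subseteq> F i) \<and> (\<forall>i. add_subgroup (F i)) \<and>
     (\<forall>i. \<forall>a\<in>F i. \<exists>e\<in>G 0 \<inter> F i. \<exists>y\<in>G 1 \<inter> F i. a = e + y) \<and>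
     (\<forall>i j. \<forall>a\<in>F i. \<forall>b\<in>F j. a * b \<in> F (i + j)) \<and>
     (\<forall>i j. \<forall>a\<in>F i. \<forall>b\<in>F j. br a b \<in> F (i + j)) \<and>
     (\<forall>i. \<forall>a\<in>F i. d a \<in> F i) \<and>
     \<comment> \<open>completeness (Hausdorff and every Cauchy sequence converges)\<close>
     (\<Inter>i. F i) = {0} \<and>
     (\<forall>x. fcauchy F x \<longrightarrow> (\<exists>s. fconv F x s))"

definition exp_ad :: "(nat \<Rightarrow> 'a::ring_1 set) \<Rightarrow> ('a \<Rightarrow> 'a \<Rightarrow> 'a) \<Rightarrow> 'a \<Rightarrow> 'a \<Rightarrow> 'a" where
  "exp_ad F br r a = fsuminf F (\<lambda>k. invn (fact k) * ((br r) ^^ k) a)"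

definition c_exp :: "(nat \<Rightarrow> 'a::ring_1 set) \<Rightarrow> ('a \<Rightarrow> 'a \<Rightarrow> 'a) \<Rightarrow> ('a \<Rightarrow> 'a) \<Rightarrow> 'a \<Rightarrow> 'a" where
  "c_exp F br d r = fsuminf F (\<lambda>n. invn (fact (n + 1)) * ((br r) ^^ n) (d r))"

definition alg_exp :: "(nat \<Rightarrow> 'a::ring_1 set) \<Rightarrow> 'a \<Rightarrow> 'a" where
  "alg_exp F c = fsuminf F (\<lambda>m. invn (fact m) * c ^ m)"

definition T_exp :: "(nat \<Rightarrow> 'a::ring_1 set) \<Rightarrow> ('a \<Rightarrow> 'a \<Rightarrow> 'a) \<Rightarrow> ('a \<Rightarrow> 'a) \<Rightarrow> 'a \<Rightarrow> 'a \<Rightarrow> 'a" where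
  "T_exp F br d r a = alg_exp F (c_exp F br d r) * exp_ad F br r a"

end

theory Submission
  imports Defs "HOL.Modules"
begin

text \<open>Since \<open>d\<close> is a derivation of the odd bracket, \<open>d ad(r) = ad(d r) + ad(r) d\<close>. Iterating and
  summing the exponential series gives \<open>d exp(r) = exp(r) d + {c, exp(r) _}\<close> with \<open>c = c(exp r)\<close>,
  and the same computation applied to \<open>d r\<close> shows that \<open>c\<close> is a Maurer--Cartan element,
  \<open>d c = {c, c}/2\<close>. For the even element \<open>c\<close>, the BV identity gives
  \<open>d (exp(c) x) = exp(c) ((d c - {c, c}/2) x + d x - {c, x})\<close>, so multiplication by \<open>exp(c)\<close>
  turns \<open>d - {c, _}\<close> into \<open>d\<close>, and the two twists by \<open>{c, _}\<close> cancel.\<close>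

lemma add_subgroup_zero: "add_subgroup S \<Longrightarrow> 0 \<in> S"
  unfolding add_subgroup_def by blast

lemma add_subgroup_add: "add_subgroup S \<Longrightarrow> x \<in> S \<Longrightarrow> y \<in> S \<Longrightarrow> x + y \<in> S"
  unfolding add_subgroup_def by blast

lemma add_subgroup_uminus: "add_subgroup S \<Longrightarrow> x \<in> S \<Longrightarrow> - x \<in> S"
  unfolding add_subgroup_def by blast

lemma add_subgroup_diff: "add_subgroup S \<Longrightarrow> x \<in> S \<Longrightarrow> y \<in> S \<Longrightarrow> x - y \<in> S"
  by (metis add_subgroup_add add_subgroup_uminus diff_conv_add_uminus)

lemma add_subgroup_sum:
  assumes "add_subgroup S" "\<And>x. x \<in> A \<Longrightarrow> f x \<in> S"
  shows "sum f A \<in> S"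
  using assms(2) by (induction A rule: infinite_finite_induct)
    (auto intro: add_subgroup_zero add_subgroup_add assms(1))

lemma add_subgroup_of_nat_mult: "add_subgroup S \<Longrightarrow> x \<in> S \<Longrightarrow> of_nat n * x \<in> S"
  by (induction n) (auto simp: add_subgroup_zero add_subgroup_add distrib_right)

lemma additive_of_nat_mult:
  fixes \<phi> :: "'a::ring_1 \<Rightarrow> 'a"
  assumes "additive \<phi>"
  shows "\<phi> (of_nat n * x) = of_nat n * \<phi> x"
  by (induction n) (simp_all add: additive.zero[OF assms] additive.add[OF assms] distrib_right)

lemma mult_of_nat_left_commute: "x * (of_nat n * y) = of_nat n * (x * y :: 'a::ring_1)"
  by (metis mult.assoc mult_of_nat_commute)

lemma mult_of_nat_mult_power_pred:
  "x * (of_nat m * (x ^ (m - 1) * y)) = of_nat m * (x ^ m * (y :: 'a::ring_1))"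
proof (cases m)
  case (Suc k)
  show ?thesis unfolding Suc by (simp only: mult_of_nat_left_commute diff_Suc_1 power_Suc mult.assoc)
qed simp

lemma mult_of_nat_choose_two_mult_power:
  "x * (of_nat (m choose 2) * (x ^ (m - 2) * y)) = of_nat (m choose 2) * (x ^ (m - 1) * (y :: 'a::ring_1))"
proof (cases "m < 2")
  case True
  then show ?thesis by (simp add: binomial_eq_0)
next
  case False
  then have "m - 1 = Suc (m - 2)" by simp
  then show ?thesis by (simp add: mult_of_nat_left_commute mult.assoc)
qed

text \<open>Since \<open>of_nat n\<close> is central, a one-sided inverse of it is two-sided and unique, so the
  Hilbert choice in \<^const>\<open>invn\<close> picks it.\<close>
lemma invn_eqI:
  fixes u :: "'a::ring_1"
  assumes "of_nat n * u = 1"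
  shows "invn n = u"
proof -
  have v: "of_nat n * invn n = (1::'a) \<and> invn n * of_nat n = (1::'a)"
    unfolding invn_def by (rule someI[of _ u]) (simp add: assms mult_of_nat_commute[symmetric])
  have "invn n = invn n * (of_nat n * u)" using assms by simp
  also have "\<dots> = u" using v by (simp add: mult.assoc[symmetric])
  finally show ?thesis .
qed

lemma of_nat_inverse_commute:
  fixes u :: "'a::ring_1"
  assumes "of_nat n * u = 1"
  shows "u * x = x * u"
proof -
  have "u * x = u * x * (of_nat n * u)" using assms by simp
  also have "\<dots> = u * (x * of_nat n) * u" by (simp only: mult.assoc)
  also have "x * of_nat n = of_nat n * x" by (rule mult_of_nat_commute[symmetric])
  also have "u * (of_nat n * x) * u = (u * of_nat n) * x * u" by (simp only: mult.assoc)
  also have "u * of_nat n = 1" using assms by (simp add: mult_of_nat_commute[symmetric])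
  finally show ?thesis by simp
qed

lemma additive_of_nat_inverse_mult:
  fixes \<phi> :: "'a::ring_1 \<Rightarrow> 'a"
  assumes "additive \<phi>" "of_nat n * u = 1"
  shows "\<phi> (u * x) = u * \<phi> x"
proof -
  have "u * \<phi> x = u * \<phi> (of_nat n * (u * x))" using assms(2) by (simp add: mult.assoc[symmetric])
  also have "\<dots> = (u * of_nat n) * \<phi> (u * x)" by (simp add: additive_of_nat_mult[OF assms(1)] mult.assoc)
  also have "u * of_nat n = 1" using assms(2) by (simp add: mult_of_nat_commute[symmetric])
  finally show ?thesis by simp
qed

lemma sum_binomial_reflect:
  fixes Z :: "nat \<Rightarrow> 'a::ring_1"
  assumes "\<And>i. i \<le> N \<Longrightarrow> Z (N - i) = Z i"
  shows "(\<Sum>i\<le>N. of_nat (Suc N choose Suc i) * Z i) = (\<Sum>i\<le>N. of_nat (Suc N choose i) * Z i)"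
proof -
  have "(\<Sum>i\<le>N. of_nat (Suc N choose Suc i) * Z i)
      = (\<Sum>i\<le>N. of_nat (Suc N choose Suc (N - i)) * Z (N - i))"
    using sum.atLeastAtMost_rev[of "\<lambda>i. of_nat (Suc N choose Suc i) * Z i" 0 N]
    by (simp add: atLeast0AtMost)
  also have "\<dots> = (\<Sum>i\<le>N. of_nat (Suc N choose i) * Z i)"
  proof (rule sum.cong[OF refl])
    fix i assume "i \<in> {..N}"
    then have "i \<le> N" by simp
    then have "Suc N choose Suc (N - i) = Suc N choose i"
      using binomial_symmetric[of i "Suc N"] by (simp add: Suc_diff_le)
    then show "of_nat (Suc N choose Suc (N - i)) * Z (N - i) = of_nat (Suc N choose i) * Z i"
      using assms[OF \<open>i \<le> N\<close>] by simp
  qed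
  finally show ?thesis .
qed

lemma sum_binomial_Suc_Pascal:
  fixes Z :: "nat \<Rightarrow> 'a::ring_1"
  shows "(\<Sum>i<Suc n. of_nat (Suc n choose Suc i) * Z i)
       = Z 0 + (\<Sum>i<n. of_nat (n choose Suc i) * Z (Suc i)) + (\<Sum>i<n. of_nat (n choose Suc i) * Z i)"
proof -
  have "(\<Sum>i<Suc n. of_nat (Suc n choose Suc i) * Z i)
      = (\<Sum>i<Suc n. of_nat (n choose i) * Z i) + (\<Sum>i<Suc n. of_nat (n choose Suc i) * Z i)"
    by (simp add: sum.distrib distrib_right)
  also have "(\<Sum>i<Suc n. of_nat (n choose i) * Z i) = Z 0 + (\<Sum>i<n. of_nat (n choose Suc i) * Z (Suc i))"
    by (simp only: sum.lessThan_Suc_shift) simp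
  also have "(\<Sum>i<Suc n. of_nat (n choose Suc i) * Z i) = (\<Sum>i<n. of_nat (n choose Suc i) * Z i)"
    by (simp add: binomial_eq_0)
  finally show ?thesis .
qed

section \<open>Series in a complete filtered ring\<close>

locale complete_filtered_ring =
  fixes F :: "nat \<Rightarrow> 'a::ring_1 set"
  assumes F_0: "F 0 = UNIV"
    and F_Suc_subset: "F (Suc i) \<subseteq> F i"
    and F_subgroup: "add_subgroup (F i)"
    and F_mult: "a \<in> F i \<Longrightarrow> b \<in> F j \<Longrightarrow> a * b \<in> F (i + j)"
    and F_Hausdorff: "(\<Inter>i. F i) = {0}"
    and F_complete: "fcauchy F x \<Longrightarrow> \<exists>s. fconv F x s"
begin

lemma F_antimono: "i \<le> j \<Longrightarrow> F j \<subseteq> F i"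
  by (induction j rule: dec_induct) (use F_Suc_subset in auto)

lemma F_antimonoD: "x \<in> F j \<Longrightarrow> i \<le> j \<Longrightarrow> x \<in> F i"
  using F_antimono by blast

lemma in_F_0 [simp]: "x \<in> F 0"
  using F_0 by simp

lemma eq_zero_if_in_all_F: "(\<And>i. x \<in> F i) \<Longrightarrow> x = 0"
  using F_Hausdorff by blast

lemma mult_in_F_left: "x \<in> F i \<Longrightarrow> u * x \<in> F i"
  using F_mult[of u 0 x i] by simp

lemma mult_in_F_right: "x \<in> F i \<Longrightarrow> x * u \<in> F i"
  using F_mult[of x i u 0] by simp

lemma power_in_F:
  assumes "x \<in> F 1"
  shows "x ^ m \<in> F m"
proof (induction m)
  case (Suc m)
  from F_mult[OF assms this] show ?case by simp
qed simp

definition fsums :: "(nat \<Rightarrow> 'a) \<Rightarrow> 'a \<Rightarrow> bool" where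
  "fsums f s \<longleftrightarrow> fconv F (\<lambda>n. \<Sum>k<n. f k) s"

lemma fconv_unique:
  assumes s: "fconv F x s" and t: "fconv F x t"
  shows "s = t"
proof -
  have "s - t \<in> F i" for i
  proof -
    obtain N1 N2 where "\<forall>n\<ge>N1. x n - s \<in> F i" "\<forall>n\<ge>N2. x n - t \<in> F i"
      using s t unfolding fconv_def by blast
    then have "x (N1 + N2) - s \<in> F i" "x (N1 + N2) - t \<in> F i" by simp_all
    then have "(x (N1 + N2) - t) - (x (N1 + N2) - s) \<in> F i"
      using add_subgroup_diff[OF F_subgroup] by blast
    then show ?thesis by simp
  qed
  then show ?thesis using eq_zero_if_in_all_F by fastforce
qed

lemma fsums_unique2: "fsums f s \<Longrightarrow> fsums f t \<Longrightarrow> s = t"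
  unfolding fsums_def by (rule fconv_unique)

lemma fsums_unique: "fsums f s \<Longrightarrow> fsuminf F f = s"
  unfolding fsuminf_def by (rule the_equality) (auto simp: fsums_def[symmetric] intro: fsums_unique2)

lemma sum_atLeastLessThan_in_F:
  assumes "\<And>k. f k \<in> F k" "N \<le> m"
  shows "(\<Sum>k\<in>{m..<n}. f k) \<in> F N"
  by (rule add_subgroup_sum[OF F_subgroup]) (use assms F_antimonoD[OF assms(1)] in auto)

lemma partial_sum_diff_in_F:
  assumes "\<And>k. f k \<in> F k" "N \<le> m" "m \<le> n"
  shows "(\<Sum>k<n. f k) - (\<Sum>k<m. f k) \<in> F N"
  using sum_atLeastLessThan_in_F[OF assms(1,2), of n] sum_diff_nat_ivl[of 0 m n f] assms(3)
  by (simp add: atLeast0LessThan)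

lemma fsums_fsuminf:
  assumes f: "\<And>k. f k \<in> F k"
  shows "fsums f (fsuminf F f)"
proof -
  have "fcauchy F (\<lambda>n. \<Sum>k<n. f k)"
    unfolding fcauchy_def
  proof
    fix i
    have "(\<Sum>k<m. f k) - (\<Sum>k<n. f k) \<in> F i" if "i \<le> m" "i \<le> n" for m n
    proof (cases "n \<le> m")
      case True
      then show ?thesis using partial_sum_diff_in_F[OF f] that by blast
    next
      case False
      then have "(\<Sum>k<n. f k) - (\<Sum>k<m. f k) \<in> F i"
        using partial_sum_diff_in_F[OF f] that by simp
      from add_subgroup_uminus[OF F_subgroup this] show ?thesis by simp
    qed
    then show "\<exists>N. \<forall>m\<ge>N. \<forall>n\<ge>N. (\<Sum>k<m. f k) - (\<Sum>k<n. f k) \<in> F i" by blast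
  qed
  then obtain s where "fsums f s" using F_complete unfolding fsums_def by blast
  then show ?thesis using fsums_unique by simp
qed

lemma fsums_tail:
  assumes "fsums f s" "\<And>k. f k \<in> F k"
  shows "s - (\<Sum>k<N. f k) \<in> F N"
proof -
  obtain M0 where M0: "\<forall>n\<ge>M0. (\<Sum>k<n. f k) - s \<in> F N"
    using assms(1) unfolding fsums_def fconv_def by blast
  define M where "M = M0 + N"
  have M1: "(\<Sum>k<M. f k) - s \<in> F N"
    using M0 unfolding M_def by (meson le_add1)
  have M2: "N \<le> M" unfolding M_def by simp
  have "(\<Sum>k<M. f k) - (\<Sum>k<N. f k) \<in> F N"
    using partial_sum_diff_in_F[OF assms(2) order_refl M2] .
  from add_subgroup_diff[OF F_subgroup this M1] show ?thesis by simp
qed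

lemma fsums_closed:
  assumes "fsums f s" "\<And>k. f k \<in> F i"
  shows "s \<in> F i"
proof -
  obtain N where "\<forall>n\<ge>N. (\<Sum>k<n. f k) - s \<in> F i"
    using assms(1) unfolding fsums_def fconv_def by blast
  then have N: "(\<Sum>k<N. f k) - s \<in> F i" by blast
  have "(\<Sum>k<N. f k) \<in> F i" by (rule add_subgroup_sum[OF F_subgroup assms(2)])
  from add_subgroup_diff[OF F_subgroup this N] show ?thesis by simp
qed

lemma fsums_add:
  assumes "fsums f s" "fsums g t"
  shows "fsums (\<lambda>k. f k + g k) (s + t)"
  unfolding fsums_def fconv_def
proof
  fix i
  obtain N1 N2 where N1: "\<forall>n\<ge>N1. (\<Sum>k<n. f k) - s \<in> F i"
    and N2: "\<forall>n\<ge>N2. (\<Sum>k<n. g k) - t \<in> F i"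
    using assms unfolding fsums_def fconv_def by blast
  have "(\<Sum>k<n. f k + g k) - (s + t) \<in> F i" if "N1 + N2 \<le> n" for n
  proof -
    have "(\<Sum>k<n. f k) - s \<in> F i" "(\<Sum>k<n. g k) - t \<in> F i"
      using N1 N2 that by simp_all
    from add_subgroup_add[OF F_subgroup this]
    show ?thesis by (simp add: sum.distrib algebra_simps)
  qed
  then show "\<exists>N. \<forall>n\<ge>N. (\<Sum>k<n. f k + g k) - (s + t) \<in> F i" by blast
qed

lemma fsums_map:
  assumes "additive \<phi>" "\<And>i x. x \<in> F i \<Longrightarrow> \<phi> x \<in> F i" "fsums f s"
  shows "fsums (\<lambda>k. \<phi> (f k)) (\<phi> s)"
  unfolding fsums_def fconv_def
proof
  fix i
  obtain N where N: "\<forall>n\<ge>N. (\<Sum>k<n. f k) - s \<in> F i"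
    using assms(3) unfolding fsums_def fconv_def by blast
  have "(\<Sum>k<n. \<phi> (f k)) - \<phi> s = \<phi> ((\<Sum>k<n. f k) - s)" for n
    by (simp add: additive.diff[OF assms(1)] additive.sum[OF assms(1)])
  then have "\<forall>n\<ge>N. (\<Sum>k<n. \<phi> (f k)) - \<phi> s \<in> F i"
    using N assms(2) by simp
  then show "\<exists>N. \<forall>n\<ge>N. (\<Sum>k<n. \<phi> (f k)) - \<phi> s \<in> F i" by blast
qed

lemma fsums_minus: "fsums f s \<Longrightarrow> fsums (\<lambda>k. - f k) (- s)"
  by (rule fsums_map[where \<phi> = uminus]) (auto simp: additive_def intro: add_subgroup_uminus[OF F_subgroup])

lemma fsums_diff: "fsums f s \<Longrightarrow> fsums g t \<Longrightarrow> fsums (\<lambda>k. f k - g k) (s - t)"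
  using fsums_add[OF _ fsums_minus, of f s g t] by simp

lemma fsums_mult: "fsums f s \<Longrightarrow> fsums (\<lambda>k. u * f k) (u * s)"
  by (rule fsums_map[where \<phi> = "\<lambda>x. u * x"]) (simp_all add: additive_def distrib_left mult_in_F_left)

lemma fsums_mult2: "fsums f s \<Longrightarrow> fsums (\<lambda>k. f k * u) (s * u)"
  by (rule fsums_map[where \<phi> = "\<lambda>x. x * u"]) (simp_all add: additive_def distrib_right mult_in_F_right)

lemma fsums_Suc:
  assumes "fsums (\<lambda>k. f (Suc k)) s"
  shows "fsums f (s + f 0)"
  unfolding fsums_def fconv_def
proof
  fix i
  obtain N where N: "\<forall>n\<ge>N. (\<Sum>k<n. f (Suc k)) - s \<in> F i"
    using assms unfolding fsums_def fconv_def by blast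
  have "(\<Sum>k<n. f k) - (s + f 0) \<in> F i" if "Suc N \<le> n" for n
  proof -
    obtain m where m: "n = Suc m" "N \<le> m" using \<open>Suc N \<le> n\<close> by (cases n) auto
    have "(\<Sum>k<n. f k) - (s + f 0) = (\<Sum>k<m. f (Suc k)) - s"
      unfolding m(1) sum.lessThan_Suc_shift by (simp add: algebra_simps)
    also have "\<dots> \<in> F i" using N m(2) by blast
    finally show ?thesis .
  qed
  then show "\<exists>N. \<forall>n\<ge>N. (\<Sum>k<n. f k) - (s + f 0) \<in> F i" by blast
qed

lemma fsums_alg_exp: "x \<in> F 1 \<Longrightarrow> fsums (\<lambda>m. invn (fact m) * x ^ m) (alg_exp F x)"
  unfolding alg_exp_def by (rule fsums_fsuminf) (rule mult_in_F_left[OF power_in_F])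

lemma Cauchy_product_partial_sum_in_F:
  fixes m :: "'a \<Rightarrow> 'a \<Rightarrow> 'a"
  assumes add_left: "\<And>y. additive (\<lambda>x. m x y)" and add_right: "\<And>x. additive (m x)"
    and m_F: "\<And>i j x y. x \<in> F i \<Longrightarrow> y \<in> F j \<Longrightarrow> m x y \<in> F (i + j)"
    and a: "\<And>k. a k \<in> F k" and b: "\<And>k. b k \<in> F k"
  shows "m (\<Sum>k<n. a k) (\<Sum>k<n. b k) - (\<Sum>k<n. \<Sum>i\<le>k. m (a i) (b (k - i))) \<in> F n"
proof -
  define g where "g = (\<lambda>(p, q). m (a p) (b q))"
  define S where "S = {..<n} \<times> {..<n}"
  define T where "T = {(p, q). p + q < n}"
  have "m (\<Sum>k<n. a k) (\<Sum>k<n. b k) = (\<Sum>p<n. m (a p) (\<Sum>k<n. b k))"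
    by (rule additive.sum[OF add_left])
  also have "\<dots> = (\<Sum>p<n. \<Sum>q<n. m (a p) (b q))"
    by (simp only: additive.sum[OF add_right])
  also have "\<dots> = sum g S"
    unfolding S_def g_def by (rule sum.cartesian_product)
  also have "\<dots> = sum g (S - T) + sum g T"
    by (rule sum.subset_diff) (auto simp: S_def T_def)
  also have "sum g T = (\<Sum>k<n. \<Sum>i\<le>k. m (a i) (b (k - i)))"
    unfolding g_def T_def by (rule sum.triangle_reindex)
  finally have "m (\<Sum>k<n. a k) (\<Sum>k<n. b k) - (\<Sum>k<n. \<Sum>i\<le>k. m (a i) (b (k - i))) = sum g (S - T)"
    by simp
  also have "\<dots> \<in> F n"
  proof (rule add_subgroup_sum[OF F_subgroup])
    fix x assume "x \<in> S - T"
    then obtain p q where x: "x = (p, q)" "n \<le> p + q" unfolding S_def T_def by auto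
    have "m (a p) (b q) \<in> F (p + q)" using m_F a b by blast
    then show "g x \<in> F n" using x F_antimonoD unfolding g_def by auto
  qed
  finally show ?thesis .
qed

lemma fsums_Cauchy_product:
  fixes m :: "'a \<Rightarrow> 'a \<Rightarrow> 'a"
  assumes add_left: "\<And>y. additive (\<lambda>x. m x y)" and add_right: "\<And>x. additive (m x)"
    and m_F: "\<And>i j x y. x \<in> F i \<Longrightarrow> y \<in> F j \<Longrightarrow> m x y \<in> F (i + j)"
    and a: "fsums a A" "\<And>k. a k \<in> F k" and b: "fsums b B" "\<And>k. b k \<in> F k"
  shows "fsums (\<lambda>n. \<Sum>i\<le>n. m (a i) (b (n - i))) (m A B)"
  unfolding fsums_def fconv_def
proof
  have "(\<Sum>k<n. \<Sum>j\<le>k. m (a j) (b (k - j))) - m A B \<in> F n" for n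
  proof -
    define An where "An = (\<Sum>k<n. a k)"
    define Bn where "Bn = (\<Sum>k<n. b k)"
    define P where "P = (\<Sum>k<n. \<Sum>j\<le>k. m (a j) (b (k - j)))"
    have "m (A - An) B \<in> F n"
      using m_F[OF fsums_tail[OF a] in_F_0] unfolding An_def by simp
    moreover have "m An (B - Bn) \<in> F n"
      using m_F[OF in_F_0 fsums_tail[OF b]] unfolding Bn_def by simp
    moreover have "m An Bn - P \<in> F n"
      unfolding An_def Bn_def P_def
      by (rule Cauchy_product_partial_sum_in_F[OF add_left add_right m_F a(2) b(2)])
    moreover have "m A B - P = m (A - An) B + m An (B - Bn) + (m An Bn - P)"
      by (simp add: additive.diff[OF add_left] additive.diff[OF add_right])
    ultimately have "m A B - P \<in> F n"
      by (metis add_subgroup_add[OF F_subgroup])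
    from add_subgroup_uminus[OF F_subgroup this] show ?thesis unfolding P_def by simp
  qed
  then show "\<exists>N. \<forall>n\<ge>N. (\<Sum>k<n. \<Sum>j\<le>k. m (a j) (b (k - j))) - m A B \<in> F i" for i
    using F_antimonoD by blast
qed

end

section \<open>Complete filtered BV algebras\<close>

locale complete_filtered_BV_algebra = complete_filtered_ring F
  for F :: "nat \<Rightarrow> 'a::ring_1 set" +
  fixes G :: "nat \<Rightarrow> 'a set" and br :: "'a \<Rightarrow> 'a \<Rightarrow> 'a" and d :: "'a \<Rightarrow> 'a"
  assumes of_nat_invertible: "0 < n \<Longrightarrow> \<exists>u::'a. of_nat n * u = 1 \<and> u * of_nat n = 1"
    and even_subgroup: "add_subgroup (G 0)"
    and odd_subgroup: "add_subgroup (G 1)"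
    and even_odd_disjoint: "G 0 \<inter> G 1 = {0}"
    and even_odd_decomp: "\<exists>e\<in>G 0. \<exists>y\<in>G 1. a = e + y"
    and one_even: "1 \<in> G 0"
    and G_mult: "p < 2 \<Longrightarrow> q < 2 \<Longrightarrow> a \<in> G p \<Longrightarrow> b \<in> G q \<Longrightarrow> a * b \<in> G ((p + q) mod 2)"
    and G_commute: "p < 2 \<Longrightarrow> q < 2 \<Longrightarrow> a \<in> G p \<Longrightarrow> b \<in> G q \<Longrightarrow> a * b = (-1) ^ (p * q) * (b * a)"
    and br_add_left: "br (a + b) c = br a c + br b c"
    and br_add_right: "br a (b + c) = br a b + br a c"
    and br_G: "p < 2 \<Longrightarrow> q < 2 \<Longrightarrow> a \<in> G p \<Longrightarrow> b \<in> G q \<Longrightarrow> br a b \<in> G ((p + q + 1) mod 2)"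
    and br_antisym: "p < 2 \<Longrightarrow> q < 2 \<Longrightarrow> a \<in> G p \<Longrightarrow> b \<in> G q \<Longrightarrow>
      br a b = - ((-1) ^ ((p + 1) * (q + 1)) * br b a)"
    and br_Jacobi: "p < 2 \<Longrightarrow> q < 2 \<Longrightarrow> a \<in> G p \<Longrightarrow> b \<in> G q \<Longrightarrow>
      br a (br b c) = br (br a b) c + (-1) ^ ((p + 1) * (q + 1)) * br b (br a c)"
    and br_Leibniz: "p < 2 \<Longrightarrow> q < 2 \<Longrightarrow> a \<in> G p \<Longrightarrow> b \<in> G q \<Longrightarrow>
      br a (b * c) = br a b * c + (-1) ^ ((p + 1) * q) * (b * br a c)"
    and d_add: "d (a + b) = d a + d b"
    and d_G: "p < 2 \<Longrightarrow> a \<in> G p \<Longrightarrow> d a \<in> G ((p + 1) mod 2)"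
    and d_d: "d (d a) = 0"
    and BV_identity: "p < 2 \<Longrightarrow> a \<in> G p \<Longrightarrow>
      (-1) ^ p * br a b = - d (a * b) + d a * b + (-1) ^ p * (a * d b)"
    and F_decomp: "a \<in> F i \<Longrightarrow> \<exists>e\<in>G 0 \<inter> F i. \<exists>y\<in>G 1 \<inter> F i. a = e + y"
    and br_F: "a \<in> F i \<Longrightarrow> b \<in> F j \<Longrightarrow> br a b \<in> F (i + j)"
    and d_F: "a \<in> F i \<Longrightarrow> d a \<in> F i"

lemma complete_filtered_BV_algebraI:
  assumes "complete_filtered_BV G F br d"
  shows "complete_filtered_BV_algebra F G br d"
  using assms unfolding complete_filtered_BV_def complete_filtered_BV_algebra_def
    complete_filtered_BV_algebra_axioms_def complete_filtered_ring_def
  by (elim conjE) (intro conjI; meson)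

context complete_filtered_BV_algebra
begin

lemma additive_d: "additive d"
  by (simp add: additive_def d_add)

lemma additive_br_left: "additive (\<lambda>x. br x y)"
  by (simp add: additive_def br_add_left)

lemma additive_br_right: "additive (br x)"
  by (simp add: additive_def br_add_right)

lemma of_nat_mult_invn:
  assumes "0 < n"
  shows "of_nat n * invn n = (1::'a)"
proof -
  obtain u :: 'a where "of_nat n * u = 1"
    using of_nat_invertible[OF assms] by blast
  then show ?thesis by (simp add: invn_eqI)
qed

lemma invn_mult_of_nat: "0 < n \<Longrightarrow> invn n * of_nat n = (1::'a)"
  using of_nat_mult_invn mult_of_nat_commute[of n "invn n :: 'a"] by simp

lemma invn_commute: "0 < n \<Longrightarrow> invn n * x = x * (invn n :: 'a)"
  by (rule of_nat_inverse_commute[OF of_nat_mult_invn])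

lemma additive_invn:
  fixes \<phi> :: "'a \<Rightarrow> 'a"
  assumes "additive \<phi>" "0 < n"
  shows "\<phi> (invn n * x) = invn n * \<phi> x"
  by (rule additive_of_nat_inverse_mult[OF assms(1) of_nat_mult_invn[OF assms(2)]])

lemma br_invn_invn:
  assumes "0 < m" "0 < n"
  shows "br (invn m * x) (invn n * y) = invn m * invn n * br x y"
proof -
  have "br (invn m * x) (invn n * y) = invn m * br x (invn n * y)"
    by (rule additive_invn[OF additive_br_left assms(1)])
  also have "br x (invn n * y) = invn n * br x y"
    by (rule additive_invn[OF additive_br_right assms(2)])
  finally show ?thesis by (simp only: mult.assoc)
qed

lemma invn_mult:
  assumes "0 < m" "0 < n"
  shows "invn (m * n) = (invn m * invn n :: 'a)"
proof (rule invn_eqI)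
  have "of_nat (m * n) * (invn m * invn n) = (of_nat m * (of_nat n * invn m) * invn n :: 'a)"
    by (simp only: of_nat_mult mult.assoc)
  also have "of_nat n * invn m = invn m * (of_nat n :: 'a)" by (rule mult_of_nat_commute)
  also have "of_nat m * (invn m * of_nat n) * invn n = (of_nat m * invn m) * (of_nat n * invn n :: 'a)"
    by (simp only: mult.assoc)
  also have "\<dots> = 1"
    using assms by (simp add: of_nat_mult_invn)
  finally show "of_nat (m * n) * (invn m * invn n) = (1::'a)" .
qed

lemma invn_fact_binomial:
  assumes "k \<le> n"
  shows "invn (fact n) * of_nat (n choose k) = invn (fact k) * (invn (fact (n - k)) :: 'a)"
proof -
  have "fact n = fact k * fact (n - k) * (n choose k)"
    using binomial_fact_lemma[OF assms] by simp
  then have "invn (fact n) = invn (fact k) * invn (fact (n - k)) * (invn (n choose k) :: 'a)"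
    using zero_less_binomial[OF assms] by (simp add: invn_mult)
  then show ?thesis
    using zero_less_binomial[OF assms] by (simp add: mult.assoc invn_mult_of_nat)
qed

lemma invn_1 [simp]: "invn 1 = (1::'a)"
  by (rule invn_eqI) simp

lemma invn_fact_Suc: "invn (fact (Suc k)) * of_nat (Suc k) = (invn (fact k) :: 'a)"
proof -
  have "invn (fact (Suc k)) * of_nat (Suc k choose 1) = invn (fact 1) * (invn (fact (Suc k - 1)) :: 'a)"
    by (rule invn_fact_binomial) simp
  then show ?thesis by (simp only: choose_one fact_1 invn_1 diff_Suc_1 mult_1_left)
qed

lemma invn_fact_choose_two:
  "invn (fact (Suc (Suc k))) * of_nat (Suc (Suc k) choose 2) = invn 2 * (invn (fact k) :: 'a)"
proof -
  have "invn (fact (Suc (Suc k))) * of_nat (Suc (Suc k) choose 2)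
      = invn (fact 2) * (invn (fact (Suc (Suc k) - 2)) :: 'a)"
    by (rule invn_fact_binomial) simp
  moreover have "Suc (Suc k) - 2 = k" by simp
  ultimately show ?thesis by (simp only: fact_2)
qed

lemma br_invn_fact:
  "br (invn (fact i) * x) (invn (fact j) * y) = invn (fact (i + j)) * of_nat (i + j choose i) * br x y"
proof -
  have "invn (fact (i + j)) * of_nat (i + j choose i) = invn (fact i) * (invn (fact j) :: 'a)"
    using invn_fact_binomial[of i "i + j"] by simp
  then show ?thesis by (simp add: br_invn_invn)
qed

lemma G_subgroup: "p < 2 \<Longrightarrow> add_subgroup (G p)"
  using even_subgroup odd_subgroup by (cases p) auto

lemma of_nat_mult_G: "p < 2 \<Longrightarrow> x \<in> G p \<Longrightarrow> of_nat n * x \<in> G p"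
  by (rule add_subgroup_of_nat_mult[OF G_subgroup])

lemma even_mult: "a \<in> G 0 \<Longrightarrow> b \<in> G 0 \<Longrightarrow> a * b \<in> G 0"
  using G_mult[of 0 0 a b] by simp

lemma power_even: "a \<in> G 0 \<Longrightarrow> a ^ m \<in> G 0"
  by (induction m) (simp_all add: one_even even_mult)

lemma even_commute:
  assumes "a \<in> G 0"
  shows "a * b = b * a"
proof -
  obtain b0 b1 where b: "b0 \<in> G 0" "b1 \<in> G 1" "b = b0 + b1"
    using even_odd_decomp by blast
  have "a * b0 = b0 * a" using G_commute[of 0 0 a b0] assms b by simp
  moreover have "a * b1 = b1 * a" using G_commute[of 0 1 a b1] assms b by simp
  ultimately show ?thesis using b by (simp add: distrib_left distrib_right)
qed

lemma invn_even:
  assumes "0 < n"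
  shows "invn n \<in> G 0"
proof -
  obtain e y where ey: "e \<in> G 0" "y \<in> G 1" "invn n = e + y"
    using even_odd_decomp by blast
  have "of_nat n * (e + y) = 1"
    using of_nat_mult_invn[OF assms] unfolding ey(3) .
  then have "of_nat n * y = 1 - of_nat n * e"
    by (metis add_diff_cancel_left' distrib_left)
  also have "\<dots> \<in> G 0"
    using add_subgroup_diff[OF even_subgroup one_even of_nat_mult_G[OF _ ey(1)]] by simp
  finally have "of_nat n * y \<in> G 0 \<inter> G 1"
    using of_nat_mult_G[OF _ ey(2)] by simp
  then have "of_nat n * y = 0"
    using even_odd_disjoint by blast
  moreover have "y = invn n * (of_nat n * y)"
    by (simp add: mult.assoc[symmetric] invn_mult_of_nat[OF assms])
  ultimately have "y = 0" by simp
  then show ?thesis using ey by simp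
qed

text \<open>The odd part of a limit of even elements lies in every \<open>F i\<close>, because \<open>F i\<close> is spanned
  by its homogeneous parts.\<close>
lemma fsums_even:
  assumes "fsums f s" "\<And>k. f k \<in> G 0"
  shows "s \<in> G 0"
proof -
  obtain e y where ey: "e \<in> G 0" "y \<in> G 1" "s = e + y"
    using even_odd_decomp by blast
  have "y \<in> F i" for i
  proof -
    obtain N where "\<forall>n\<ge>N. (\<Sum>k<n. f k) - s \<in> F i"
      using assms(1) unfolding fsums_def fconv_def by blast
    then obtain e' y' where e': "e' \<in> G 0" "y' \<in> G 1 \<inter> F i" "(\<Sum>k<N. f k) - s = e' + y'"
      using F_decomp by blast
    have "(\<Sum>k<N. f k) - e - e' = y + y'"
      using e'(3) ey(3) by (simp add: algebra_simps)
    moreover have "(\<Sum>k<N. f k) \<in> G 0"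
      by (rule add_subgroup_sum[OF even_subgroup]) (rule assms(2))
    then have "(\<Sum>k<N. f k) - e - e' \<in> G 0"
      using ey(1) e'(1) add_subgroup_diff[OF even_subgroup] by blast
    moreover have "y + y' \<in> G 1"
      using ey e' add_subgroup_add[OF odd_subgroup] by blast
    ultimately have "y = - y'"
      using even_odd_disjoint by (auto simp: eq_neg_iff_add_eq_0)
    then show ?thesis using e' add_subgroup_uminus[OF F_subgroup] by blast
  qed
  then show ?thesis using eq_zero_if_in_all_F ey by fastforce
qed

lemma br_in_F_left: "x \<in> F i \<Longrightarrow> br x y \<in> F i"
  using br_F[of x i y 0] by simp

lemma br_commute_even: "a \<in> G 0 \<Longrightarrow> b \<in> G 0 \<Longrightarrow> br a b = br b a"
  using br_antisym[of 0 0 a b] by simp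

lemma br_Leibniz_even: "a \<in> G 0 \<Longrightarrow> b \<in> G 0 \<Longrightarrow> br a (b * c) = br a b * c + b * br a c"
  using br_Leibniz[of 0 0 a b c] by simp

lemma br_Jacobi_odd_even:
  "a \<in> G 1 \<Longrightarrow> b \<in> G 0 \<Longrightarrow> br a (br b c) = br (br a b) c + br b (br a c)"
  using br_Jacobi[of 1 0 a b c] by simp

lemma br_odd_even: "a \<in> G 1 \<Longrightarrow> b \<in> G 0 \<Longrightarrow> br a b \<in> G 0"
  using br_G[of 1 0 a b] by simp

lemma d_odd: "a \<in> G 1 \<Longrightarrow> d a \<in> G 0"
  using d_G[of 1 a] by simp

lemma d_mult_even: "a \<in> G 0 \<Longrightarrow> d (a * b) = d a * b + a * d b - br a b"
  using BV_identity[of 0 a b] by (simp add: algebra_simps)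

lemma br_mult_left_even:
  assumes a: "a \<in> G 0" and b: "b \<in> G 0"
  shows "br (a * b) y = br a y * b + a * br b y"
proof -
  have homogeneous: "br (a * b) y = br a y * b + a * br b y" if q: "q < 2" "y \<in> G q" for q y
  proof -
    have antisym: "br x y = (-1) ^ q * br y x" if "x \<in> G 0" for x
      using br_antisym[of 0 q x y] q that by (cases "q = 0") auto
    have "br (a * b) y = (-1) ^ q * (br y a * b + a * br y b)"
      using antisym[OF even_mult[OF a b]] br_Leibniz[of q 0 y a b] q a by simp
    also have "\<dots> = ((-1) ^ q * br y a) * b + a * ((-1) ^ q * br y b)"
      using less_2_cases[OF q(1)] by (elim disjE) (simp_all add: distrib_left)
    finally show ?thesis using antisym[OF a] antisym[OF b] by simp
  qed
  obtain y0 y1 where y: "y0 \<in> G 0" "y1 \<in> G 1" "y = y0 + y1"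
    using even_odd_decomp by blast
  show ?thesis
    using homogeneous[of 0 y0] homogeneous[of 1 y1] y
    by (simp add: br_add_right distrib_left distrib_right)
qed

lemma d_br_odd:
  assumes "a \<in> G 1"
  shows "d (br a b) = br (d a) b + br a (d b)"
proof -
  have bv_a: "- br a b = - d (a * b) + d a * b - a * d b" for b
    using BV_identity[of 1 a b] assms by simp
  have bv_da: "br (d a) b = - d (d a * b) + d (d a) * b + d a * d b" for b
    using BV_identity[of 0 "d a" b] d_odd[OF assms] by simp
  have "- d (br a b) = d (- br a b)"
    by (simp add: additive.minus[OF additive_d])
  also have "\<dots> = - d (d (a * b)) + d (d a * b) - d (a * d b)"
    by (simp add: bv_a additive.diff[OF additive_d] additive.minus[OF additive_d] d_add)
  also have "d (d a * b) = d a * d b - br (d a) b"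
    using bv_da[of b] d_d by (simp add: algebra_simps)
  also have "d (a * d b) = d a * d b + br a (d b)"
    using bv_a[of "d b"] d_d by (simp add: algebra_simps)
  finally have "- d (br a b) = - br (d a) b - br a (d b)"
    using d_d by (simp add: algebra_simps)
  then show ?thesis by (simp add: algebra_simps)
qed

lemma br_one_right: "a \<in> G 0 \<Longrightarrow> br a 1 = 0"
  using br_Leibniz_even[OF _ one_even, of a 1] by simp

lemma br_one_left: "br 1 y = 0"
  using br_mult_left_even[OF one_even one_even, of y] by simp

lemma d_one: "d 1 = 0"
  using d_mult_even[OF one_even, of 1] br_one_right[OF one_even] by simp

lemma br_power_right:
  assumes "c \<in> G 0"
  shows "br c (c ^ m) = of_nat m * (c ^ (m - 1) * br c c)"
proof (induction m)
  case 0
  show ?case using br_one_right[OF assms] by simp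
next
  case (Suc m)
  have "br c (c ^ Suc m) = br c c * c ^ m + c * br c (c ^ m)"
    using br_Leibniz_even[OF assms assms] by simp
  also have "br c c * c ^ m = c ^ m * br c c"
    using even_commute[OF power_even[OF assms]] by simp
  also have "c * br c (c ^ m) = of_nat m * (c ^ m * br c c)"
    unfolding Suc.IH by (rule mult_of_nat_mult_power_pred)
  finally show ?case by (simp add: distrib_right)
qed

lemma br_power_left:
  assumes "c \<in> G 0"
  shows "br (c ^ m) y = of_nat m * (c ^ (m - 1) * br c y)"
proof (induction m)
  case 0
  show ?case using br_one_left by simp
next
  case (Suc m)
  have "br (c ^ Suc m) y = br c y * c ^ m + c * br (c ^ m) y"
    using br_mult_left_even[OF assms power_even[OF assms]] by simp
  also have "br c y * c ^ m = c ^ m * br c y"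
    using even_commute[OF power_even[OF assms]] by simp
  also have "c * br (c ^ m) y = of_nat m * (c ^ m * br c y)"
    unfolding Suc.IH by (rule mult_of_nat_mult_power_pred)
  finally show ?case by (simp add: distrib_right)
qed

lemma d_power:
  assumes "c \<in> G 0"
  shows "d (c ^ m) = of_nat m * (c ^ (m - 1) * d c) - of_nat (m choose 2) * (c ^ (m - 2) * br c c)"
proof (induction m)
  case 0
  show ?case using d_one by (simp add: binomial_eq_0)
next
  case (Suc m)
  have "d (c ^ Suc m) = d c * c ^ m + c * d (c ^ m) - br c (c ^ m)"
    using d_mult_even[OF assms] by simp
  also have "d c * c ^ m = c ^ m * d c"
    using even_commute[OF power_even[OF assms]] by simp
  also have "c * d (c ^ m) = of_nat m * (c ^ m * d c) - of_nat (m choose 2) * (c ^ (m - 1) * br c c)"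
    unfolding Suc.IH right_diff_distrib
    by (simp only: mult_of_nat_mult_power_pred mult_of_nat_choose_two_mult_power)
  also have "br c (c ^ m) = of_nat m * (c ^ (m - 1) * br c c)"
    by (rule br_power_right[OF assms])
  finally have "d (c ^ Suc m) = of_nat (Suc m) * (c ^ m * d c)
      - (of_nat (m choose 2) + of_nat m) * (c ^ (m - 1) * br c c)"
    by (simp add: algebra_simps)
  moreover have "Suc m choose 2 = (m choose 2) + m"
    by (simp add: numeral_2_eq_2)
  ultimately show ?case by simp
qed

lemma fsums_alg_exp_deriv:
  assumes "x \<in> F 1"
  shows "fsums (\<lambda>m. invn (fact m) * of_nat m * x ^ (m - 1)) (alg_exp F x)"
proof -
  let ?f = "\<lambda>m. invn (fact m) * of_nat m * x ^ (m - 1)"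
  have "(\<lambda>k. ?f (Suc k)) = (\<lambda>k. invn (fact k) * x ^ k)"
    by (simp only: diff_Suc_1 invn_fact_Suc)
  then have "fsums (\<lambda>k. ?f (Suc k)) (alg_exp F x)"
    using fsums_alg_exp[OF assms] by simp
  from fsums_Suc[OF this] show ?thesis by simp
qed

lemma fsums_alg_exp_deriv2:
  assumes "x \<in> F 1"
  shows "fsums (\<lambda>m. invn (fact m) * of_nat (m choose 2) * x ^ (m - 2)) (invn 2 * alg_exp F x)"
proof -
  let ?g = "\<lambda>m. invn (fact m) * of_nat (m choose 2) * x ^ (m - 2)"
  have "?g (Suc (Suc k)) = invn 2 * (invn (fact k) * x ^ k)" for k
  proof -
    have "Suc (Suc k) - 2 = k" by simp
    then show ?thesis by (simp only: invn_fact_choose_two mult.assoc)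
  qed
  then have "fsums (\<lambda>k. ?g (Suc (Suc k))) (invn 2 * alg_exp F x)"
    using fsums_mult[OF fsums_alg_exp[OF assms]] by simp
  from fsums_Suc[OF fsums_Suc[OF this]] show ?thesis
    by (simp add: numeral_2_eq_2)
qed

lemma alg_exp_even: "x \<in> G 0 \<Longrightarrow> x \<in> F 1 \<Longrightarrow> alg_exp F x \<in> G 0"
  using fsums_even[OF fsums_alg_exp] even_mult[OF invn_even power_even] by simp

lemma br_alg_exp:
  assumes "c \<in> G 0" "c \<in> F 1"
  shows "br (alg_exp F c) y = alg_exp F c * br c y"
proof -
  have "fsums (\<lambda>m. br (invn (fact m) * c ^ m) y) (br (alg_exp F c) y)"
    by (rule fsums_map[OF additive_br_left br_in_F_left fsums_alg_exp[OF assms(2)]])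
  moreover have "br (invn (fact m) * c ^ m) y = invn (fact m) * of_nat m * c ^ (m - 1) * br c y" for m
    by (simp add: additive_invn[OF additive_br_left] br_power_left[OF assms(1)] mult.assoc)
  ultimately show ?thesis
    using fsums_unique2 fsums_mult2[OF fsums_alg_exp_deriv[OF assms(2)]] by simp
qed

lemma d_alg_exp:
  assumes "c \<in> G 0" "c \<in> F 1"
  shows "d (alg_exp F c) = alg_exp F c * (d c - invn 2 * br c c)"
proof -
  have "fsums (\<lambda>m. d (invn (fact m) * c ^ m)) (d (alg_exp F c))"
    by (rule fsums_map[OF additive_d d_F fsums_alg_exp[OF assms(2)]])
  moreover have "d (invn (fact m) * c ^ m) = invn (fact m) * of_nat m * c ^ (m - 1) * d c
      - invn (fact m) * of_nat (m choose 2) * c ^ (m - 2) * br c c" for m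
    by (simp add: additive_invn[OF additive_d] d_power[OF assms(1)] right_diff_distrib mult.assoc)
  moreover have "fsums (\<lambda>m. invn (fact m) * of_nat m * c ^ (m - 1) * d c
      - invn (fact m) * of_nat (m choose 2) * c ^ (m - 2) * br c c)
      (alg_exp F c * d c - invn 2 * alg_exp F c * br c c)"
    by (rule fsums_diff[OF fsums_mult2[OF fsums_alg_exp_deriv] fsums_mult2[OF fsums_alg_exp_deriv2]])
      (use assms(2) in simp_all)
  ultimately have "d (alg_exp F c) = alg_exp F c * d c - invn 2 * alg_exp F c * br c c"
    using fsums_unique2 by simp
  also have "\<dots> = alg_exp F c * (d c - invn 2 * br c c)"
    by (simp add: invn_commute right_diff_distrib mult.assoc)
  finally show ?thesis .
qed

lemma d_alg_exp_mult:
  assumes "c \<in> G 0" "c \<in> F 1" "d c = invn 2 * br c c"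
  shows "d (alg_exp F c * x) = alg_exp F c * (d x - br c x)"
proof -
  have "d (alg_exp F c * x) = d (alg_exp F c) * x + alg_exp F c * d x - br (alg_exp F c) x"
    by (rule d_mult_even[OF alg_exp_even[OF assms(1,2)]])
  also have "\<dots> = alg_exp F c * (d x - br c x)"
    using assms by (simp add: d_alg_exp br_alg_exp right_diff_distrib mult.assoc)
  finally show ?thesis .
qed

end

section \<open>The exponential of \<open>ad r\<close> for an odd \<open>r\<close> of filtration one\<close>

locale BV_odd_element = complete_filtered_BV_algebra +
  fixes r :: 'a
  assumes r_F1: "r \<in> F 1" and r_odd: "r \<in> G 1"
begin

abbreviation c :: 'a where "c \<equiv> c_exp F br d r"

lemma additive_ad_pow: "additive (br r ^^ n)"
  by (induction n) (simp_all add: additive_def br_add_right)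

lemma ad_pow_in_F: "x \<in> F i \<Longrightarrow> (br r ^^ n) x \<in> F (i + n)"
proof (induction n)
  case (Suc n)
  from br_F[OF r_F1 Suc.IH[OF Suc.prems]] show ?case by simp
qed simp

lemma ad_pow_even: "x \<in> G 0 \<Longrightarrow> (br r ^^ n) x \<in> G 0"
  by (induction n) (simp_all add: br_odd_even[OF r_odd])

lemma d_r_even: "d r \<in> G 0"
  by (rule d_odd[OF r_odd])

text \<open>Jacobi moves \<open>ad(r)\<close> across \<open>ad(ad(r)^i (d r))\<close>, which makes the coefficients obey
  Pascal's rule.\<close>
lemma d_ad_pow:
  "d ((br r ^^ n) x) = (br r ^^ n) (d x)
     + (\<Sum>i<n. of_nat (n choose Suc i) * br ((br r ^^ i) (d r)) ((br r ^^ (n - Suc i)) x))"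
proof (induction n)
  case 0
  show ?case by simp
next
  case (Suc n)
  define Z where "Z i = br ((br r ^^ i) (d r)) ((br r ^^ (n - i)) x)" for i
  have "d ((br r ^^ Suc n) x) = br (d r) ((br r ^^ n) x) + br r (d ((br r ^^ n) x))"
    by (simp add: d_br_odd[OF r_odd])
  also have "br r (d ((br r ^^ n) x)) = (br r ^^ Suc n) (d x)
      + (\<Sum>i<n. of_nat (n choose Suc i) * br r (br ((br r ^^ i) (d r)) ((br r ^^ (n - Suc i)) x)))"
    unfolding Suc.IH
    by (simp add: br_add_right additive.sum[OF additive_br_right] additive_of_nat_mult[OF additive_br_right])
  also have "(\<Sum>i<n. of_nat (n choose Suc i) * br r (br ((br r ^^ i) (d r)) ((br r ^^ (n - Suc i)) x)))
      = (\<Sum>i<n. of_nat (n choose Suc i) * Z (Suc i)) + (\<Sum>i<n. of_nat (n choose Suc i) * Z i)"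
  proof -
    have "br r (br ((br r ^^ i) (d r)) ((br r ^^ (n - Suc i)) x)) = Z (Suc i) + Z i" if "i < n" for i
    proof -
      have "n - i = Suc (n - Suc i)" using that by simp
      then have "br r ((br r ^^ (n - Suc i)) x) = (br r ^^ (n - i)) x" by simp
      then show ?thesis
        unfolding Z_def using br_Jacobi_odd_even[OF r_odd ad_pow_even[OF d_r_even]] by simp
    qed
    then show ?thesis by (simp add: distrib_left sum.distrib)
  qed
  finally have "d ((br r ^^ Suc n) x) = (br r ^^ Suc n) (d x) + (Z 0
      + (\<Sum>i<n. of_nat (n choose Suc i) * Z (Suc i)) + (\<Sum>i<n. of_nat (n choose Suc i) * Z i))"
    unfolding Z_def by (simp add: algebra_simps)
  also have "Z 0 + (\<Sum>i<n. of_nat (n choose Suc i) * Z (Suc i)) + (\<Sum>i<n. of_nat (n choose Suc i) * Z i)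
      = (\<Sum>i<Suc n. of_nat (Suc n choose Suc i) * Z i)"
    by (rule sum_binomial_Suc_Pascal[symmetric])
  finally show ?case
    unfolding Z_def by simp
qed

definition c_term :: "nat \<Rightarrow> 'a" where
  "c_term n = invn (fact (Suc n)) * (br r ^^ n) (d r)"

definition exp_ad_term :: "'a \<Rightarrow> nat \<Rightarrow> 'a" where
  "exp_ad_term a k = invn (fact k) * (br r ^^ k) a"

lemma c_term_in_F: "c_term n \<in> F (Suc n)"
  unfolding c_term_def using mult_in_F_left ad_pow_in_F[OF d_F[OF r_F1]] by simp

lemma c_term_in_F': "c_term n \<in> F n"
  using c_term_in_F F_antimonoD le_SucI by blast

lemma fsums_c: "fsums c_term c"
proof -
  have "c = fsuminf F c_term"
    unfolding c_exp_def c_term_def by simp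
  then show ?thesis using fsums_fsuminf[OF c_term_in_F'] by simp
qed

lemma c_in_F1: "c \<in> F 1"
  by (rule fsums_closed[OF fsums_c]) (rule F_antimonoD[OF c_term_in_F], simp)

lemma c_even: "c \<in> G 0"
  using fsums_even[OF fsums_c] even_mult[OF invn_even ad_pow_even[OF d_r_even]]
  unfolding c_term_def by simp

lemma exp_ad_term_in_F: "exp_ad_term a k \<in> F k"
  unfolding exp_ad_term_def using mult_in_F_left ad_pow_in_F[OF in_F_0] by simp

lemma fsums_exp_ad: "fsums (exp_ad_term a) (exp_ad F br r a)"
proof -
  have "exp_ad F br r a = fsuminf F (exp_ad_term a)"
    unfolding exp_ad_def exp_ad_term_def ..
  then show ?thesis using fsums_fsuminf[OF exp_ad_term_in_F] by simp
qed

lemma d_exp_ad_term: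
  "d (exp_ad_term a k) = exp_ad_term (d a) k
     + invn (fact k) * (\<Sum>i<k. of_nat (k choose Suc i) * br ((br r ^^ i) (d r)) ((br r ^^ (k - Suc i)) a))"
  unfolding exp_ad_term_def by (simp add: additive_invn[OF additive_d] d_ad_pow distrib_left)

lemma br_c_term_exp_ad_term:
  assumes "i \<le> N"
  shows "br (c_term i) (exp_ad_term a (N - i))
    = invn (fact (Suc N)) * (of_nat (Suc N choose Suc i) * br ((br r ^^ i) (d r)) ((br r ^^ (N - i)) a))"
proof -
  have "Suc i + (N - i) = Suc N" using assms by simp
  then show ?thesis unfolding c_term_def exp_ad_term_def br_invn_fact by (simp only: mult.assoc)
qed

lemma d_exp_ad: "d (exp_ad F br r a) = exp_ad F br r (d a) + br c (exp_ad F br r a)"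
proof -
  define t where "t k = invn (fact k)
    * (\<Sum>i<k. of_nat (k choose Suc i) * br ((br r ^^ i) (d r)) ((br r ^^ (k - Suc i)) a))" for k
  have "fsums (\<lambda>N. \<Sum>i\<le>N. br (c_term i) (exp_ad_term a (N - i))) (br c (exp_ad F br r a))"
    by (rule fsums_Cauchy_product[OF additive_br_left additive_br_right br_F
          fsums_c c_term_in_F' fsums_exp_ad exp_ad_term_in_F])
  moreover have "(\<Sum>i\<le>N. br (c_term i) (exp_ad_term a (N - i))) = t (Suc N)" for N
    unfolding t_def by (simp add: br_c_term_exp_ad_term sum_distrib_left lessThan_Suc_atMost)
  ultimately have "fsums t (br c (exp_ad F br r a))"
    using fsums_Suc[of t] by (simp add: t_def)
  from fsums_add[OF fsums_exp_ad this]
  have "fsums (\<lambda>k. d (exp_ad_term a k)) (exp_ad F br r (d a) + br c (exp_ad F br r a))"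
    unfolding t_def d_exp_ad_term .
  then show ?thesis
    using fsums_unique2 fsums_map[OF additive_d d_F fsums_exp_ad] by blast
qed

lemma d_c_term:
  "d (c_term k) = invn (fact (Suc k))
     * (\<Sum>i<k. of_nat (k choose Suc i) * br ((br r ^^ i) (d r)) ((br r ^^ (k - Suc i)) (d r)))"
  unfolding c_term_def
  by (simp add: additive_invn[OF additive_d] d_ad_pow d_d additive.zero[OF additive_ad_pow])

lemma sum_br_c_term:
  "(\<Sum>i\<le>N. br (c_term i) (c_term (N - i)))
     = of_nat 2 * (invn (fact (Suc (Suc N)))
        * (\<Sum>i\<le>N. of_nat (Suc N choose Suc i) * br ((br r ^^ i) (d r)) ((br r ^^ (N - i)) (d r))))"
proof -
  define Z where "Z i = br ((br r ^^ i) (d r)) ((br r ^^ (N - i)) (d r))" for i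
  have "br (c_term i) (c_term (N - i)) = invn (fact (Suc (Suc N))) * (of_nat (Suc (Suc N) choose Suc i) * Z i)"
    if "i \<le> N" for i
  proof -
    have "Suc i + Suc (N - i) = Suc (Suc N)" using that by simp
    then show ?thesis unfolding c_term_def Z_def br_invn_fact by (simp only: mult.assoc)
  qed
  then have "(\<Sum>i\<le>N. br (c_term i) (c_term (N - i)))
      = invn (fact (Suc (Suc N))) * (\<Sum>i\<le>N. of_nat (Suc (Suc N) choose Suc i) * Z i)"
    by (simp add: sum_distrib_left)
  also have "(\<Sum>i\<le>N. of_nat (Suc (Suc N) choose Suc i) * Z i)
      = (\<Sum>i\<le>N. of_nat (Suc N choose i) * Z i) + (\<Sum>i\<le>N. of_nat (Suc N choose Suc i) * Z i)"
    by (simp add: sum.distrib[symmetric] distrib_right)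
  also have "(\<Sum>i\<le>N. of_nat (Suc N choose i) * Z i) = (\<Sum>i\<le>N. of_nat (Suc N choose Suc i) * Z i)"
    by (rule sum_binomial_reflect[symmetric])
      (simp add: Z_def br_commute_even[OF ad_pow_even[OF d_r_even] ad_pow_even[OF d_r_even]])
  finally show ?thesis
    unfolding Z_def by (simp add: mult_of_nat_left_commute mult_2 distrib_left)
qed

text \<open>Maurer--Cartan equation: the \<open>N\<close>-th Cauchy coefficient of \<open>{c, c}\<close> is twice that of
  \<open>d c\<close>, by the symmetry of the binomial coefficients.\<close>
lemma d_c: "d c = invn 2 * br c c"
proof -
  have Cauchy: "fsums (\<lambda>N. \<Sum>i\<le>N. br (c_term i) (c_term (N - i))) (br c c)"
    by (rule fsums_Cauchy_product[OF additive_br_left additive_br_right br_F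
          fsums_c c_term_in_F' fsums_c c_term_in_F'])
  have coefficients: "invn 2 * (\<Sum>i\<le>N. br (c_term i) (c_term (N - i))) = d (c_term (Suc N))" for N
  proof -
    have "invn 2 * of_nat 2 = (1::'a)" by (rule invn_mult_of_nat) simp
    then show ?thesis
      unfolding sum_br_c_term d_c_term lessThan_Suc_atMost diff_Suc_Suc
      by (simp only: mult.assoc[symmetric] mult_1_left)
  qed
  from fsums_mult[OF Cauchy, of "invn 2"]
  have "fsums (\<lambda>N. d (c_term (Suc N))) (invn 2 * br c c)"
    unfolding coefficients .
  moreover have "d (c_term 0) = 0"
    by (simp add: d_c_term)
  ultimately have "fsums (\<lambda>k. d (c_term k)) (invn 2 * br c c)"
    using fsums_Suc[of "\<lambda>k. d (c_term k)"] by simp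
  then show ?thesis
    using fsums_unique2 fsums_map[OF additive_d d_F fsums_c] by blast
qed

end

theorem mainTheorem9:
  fixes G F :: "nat \<Rightarrow> 'a::ring_1 set" and br :: "'a \<Rightarrow> 'a \<Rightarrow> 'a" and d :: "'a \<Rightarrow> 'a"
    and r :: 'a
  assumes "complete_filtered_BV G F br d"
    and "r \<in> F 1" and "r \<in> G 1"
  shows "d \<circ> T_exp F br d r = T_exp F br d r \<circ> d"
proof
  interpret BV_odd_element F G br d r
    by (intro BV_odd_element.intro complete_filtered_BV_algebraI BV_odd_element_axioms.intro assms)
  fix a
  have "d (T_exp F br d r a) = alg_exp F c * (d (exp_ad F br r a) - br c (exp_ad F br r a))"
    unfolding T_exp_def by (rule d_alg_exp_mult[OF c_even c_in_F1 d_c])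
  also have "\<dots> = T_exp F br d r (d a)"
    unfolding T_exp_def d_exp_ad by simp
  finally show "(d \<circ> T_exp F br d r) a = (T_exp F br d r \<circ> d) a"
    by simp
qed

end
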